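(* Let $A\in\mathbb R^{m\times n}$, $b\in\mathbb R^m$, $p\in[0,1]^n$ and $k\in\mathbb N$, and let $\bar X_1,\dots,\bar X_k\in\{0,1\}^n$ be independent random vectors, each having independent entries with $\Pr((\bar X_l)_i=1)=p_i$. Let $\gamma(p):=\min_{j\in[m]}\{\langle A_j,p\rangle-b_j\}$, where $A_j$ is the $j$-th row of $A$, let $\gamma_+(p):=\max\{\gamma(p),0\}$, and let $\eta:=\max_{j\in[m]}\|A_j\|_2$. Then \[\phi(p,k):=\Pr\big(\exists\,l\in[k]:\ A\bar X_l\ge b\big)\ge1-\exp\!\left(-2k\left[\frac{\gamma_+^2(p)}{\eta^2}-\frac{\log m}{2}\right]_+\right),\] where $[t]_+:=\max\{t,0\}$.
   Context: $[k]=\{1,\dots,k\}$; inequalities between vectors are componentwise. *)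

theory Defs
  imports "HOL-Probability.Probability"
begin

text \<open>Matrices A are functions nat => nat => real (row j, column i), used only for
  j < m, i < n; vectors likewise. Indices are 0-based: [m] is rendered as {..<m}.\<close>

definition pos_part :: "real \<Rightarrow> real" where
  "pos_part t = max t 0"

definition gamma :: "nat \<Rightarrow> nat \<Rightarrow> (nat \<Rightarrow> nat \<Rightarrow> real) \<Rightarrow> (nat \<Rightarrow> real) \<Rightarrow> (nat \<Rightarrow> real) \<Rightarrow> real" where
  "gamma m n A b p = Min ((\<lambda>j. (\<Sum>i<n. A j i * p i) - b j) ` {..<m})"

definition eta :: "nat \<Rightarrow> nat \<Rightarrow> (nat \<Rightarrow> nat \<Rightarrow> real) \<Rightarrow> real" where
  "eta m n A = Max ((\<lambda>j. sqrt (\<Sum>i<n. (A j i)\<^sup>2)) ` {..<m})"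

text \<open>Distribution of one random vector in {0,1}^n with independent Bernoulli(p_i) entries
  (True = 1), and of k independent copies X_0,...,X_(k-1).\<close>
definition bern_vec :: "nat \<Rightarrow> (nat \<Rightarrow> real) \<Rightarrow> (nat \<Rightarrow> bool) pmf" where
  "bern_vec n p = Pi_pmf {..<n} False (\<lambda>i. bernoulli_pmf (p i))"

definition bern_samples :: "nat \<Rightarrow> nat \<Rightarrow> (nat \<Rightarrow> real) \<Rightarrow> (nat \<Rightarrow> nat \<Rightarrow> bool) pmf" where
  "bern_samples k n p = Pi_pmf {..<k} (\<lambda>_. False) (\<lambda>l. bern_vec n p)"

definition phi :: "nat \<Rightarrow> nat \<Rightarrow> (nat \<Rightarrow> nat \<Rightarrow> real) \<Rightarrow> (nat \<Rightarrow> real) \<Rightarrow> (nat \<Rightarrow> real) \<Rightarrow> nat \<Rightarrow> real" where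
  "phi m n A b p k = measure_pmf.prob (bern_samples k n p)
     {X. \<exists>l<k. \<forall>j<m. (\<Sum>i<n. A j i * (if X l i then 1 else 0)) \<ge> b j}"

end

theory Submission imports Defs begin

text \<open>A single sample violates row \<open>j\<close> only if \<open>\<langle>A\<^sub>j, X\<rangle>\<close> falls at least \<open>\<gamma>(p)\<close> below
  its mean \<open>\<langle>A\<^sub>j, p\<rangle>\<close>, which by Hoeffding's inequality has probability at most
  \<open>exp (-2 \<gamma>\<^sup>2 / \<parallel>A\<^sub>j\<parallel>\<^sup>2) \<le> exp (-2 \<gamma>\<^sup>2 / \<eta>\<^sup>2)\<close>. A union bound over the \<open>m\<close> rows shows
  that one sample is infeasible with probability \<open>q \<le> min 1 (m exp (-2 \<gamma>\<^sup>2 / \<eta>\<^sup>2))\<close>,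
  and all \<open>k\<close> independent samples are infeasible with probability \<open>q\<^sup>k\<close>.\<close>

lemma expectation_bern_vec_weighted_component:
  assumes "i < n" and "0 \<le> p i" "p i \<le> 1"
  shows "measure_pmf.expectation (bern_vec n p) (\<lambda>x. a * (if x i then 1 else 0)) = a * p i"
proof -
  have "measure_pmf.expectation (bern_vec n p) (\<lambda>x. a * (if x i then 1 else 0)) =
      measure_pmf.expectation (map_pmf (\<lambda>x. x i) (bern_vec n p)) (\<lambda>b. a * (if b then 1 else 0))"
    by simp
  also have "map_pmf (\<lambda>x. x i) (bern_vec n p) = bernoulli_pmf (p i)"
    using assms(1) by (simp add: bern_vec_def Pi_pmf_component)
  finally show ?thesis
    using assms(2,3) by simp
qed

lemma bern_vec_weighted_sum_lower_tail:
  fixes a :: "nat \<Rightarrow> real"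
  assumes p: "\<forall>i<n. 0 \<le> p i \<and> p i \<le> 1"
    and g: "0 \<le> g" "g \<le> (\<Sum>i<n. a i * p i) - t"
    and s: "(\<Sum>i<n. (a i)\<^sup>2) \<le> s"
  shows "measure_pmf.prob (bern_vec n p) {x. (\<Sum>i<n. a i * (if x i then 1 else 0)) < t}
    \<le> exp (- 2 * g\<^sup>2 / s)"
proof (cases "(\<Sum>i<n. (a i)\<^sup>2) = 0")
  case True
  then have "\<forall>i<n. a i = 0"
    by (simp add: sum_nonneg_eq_0_iff)
  then have "{x. (\<Sum>i<n. a i * (if x i then 1 else 0)) < t} = {}"
    using g by auto
  then show ?thesis
    by simp
next
  case False
  then have pos: "(\<Sum>i<n. (a i)\<^sup>2) > 0"
    by (simp add: less_le sum_nonneg)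
  let ?M = "bern_vec n p"
  let ?X = "\<lambda>i x. a i * (if x i then 1 else 0 :: real)"
  interpret Hoeffding_ineq ?M "{..<n}" ?X "\<lambda>i. min 0 (a i)" "\<lambda>i. max 0 (a i)"
    "\<Sum>i<n. measure_pmf.expectation ?M (?X i)"
  proof unfold_locales
    show "prob_space.indep_vars ?M (\<lambda>_. borel) ?X {..<n}"
      unfolding bern_vec_def
      by (intro prob_space.indep_vars_compose2[OF _ indep_vars_Pi_pmf])
         (auto simp: measure_pmf.prob_space_axioms)
  qed (auto simp: min_def max_def)
  have mean: "(\<Sum>i<n. measure_pmf.expectation ?M (?X i)) = (\<Sum>i<n. a i * p i)"
    using p by (intro sum.cong refl expectation_bern_vec_weighted_component) auto
  have range: "(\<Sum>i<n. (max 0 (a i) - min 0 (a i))\<^sup>2) = (\<Sum>i<n. (a i)\<^sup>2)"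
    by (intro sum.cong) (auto simp: min_def max_def)
  define e where "e = (\<Sum>i<n. a i * p i) - t"
  have "measure_pmf.prob ?M {x. (\<Sum>i<n. ?X i x) < t}
      \<le> measure_pmf.prob ?M {x \<in> space ?M. (\<Sum>i<n. ?X i x) \<le> (\<Sum>i<n. measure_pmf.expectation ?M (?X i)) - e}"
    unfolding mean e_def by (intro measure_pmf.finite_measure_mono) auto
  also have "\<dots> \<le> exp (- 2 * e\<^sup>2 / (\<Sum>i<n. (a i)\<^sup>2))"
    using Hoeffding_ineq_le[of e] g pos unfolding range e_def by simp
  also have "\<dots> \<le> exp (- 2 * g\<^sup>2 / s)"
  proof -
    have "g\<^sup>2 / s \<le> e\<^sup>2 / (\<Sum>i<n. (a i)\<^sup>2)"
      using g s pos unfolding e_def by (intro frac_le power_mono) auto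
    then show ?thesis
      by simp
  qed
  finally show ?thesis
    by simp
qed

lemma bern_vec_some_row_violated_le:
  fixes m :: nat and A :: "nat \<Rightarrow> nat \<Rightarrow> real"
  assumes p: "\<forall>i<n. 0 \<le> p i \<and> p i \<le> 1"
    and g: "0 \<le> g" "\<forall>j<m. g \<le> (\<Sum>i<n. A j i * p i) - b j"
    and s: "\<forall>j<m. (\<Sum>i<n. (A j i)\<^sup>2) \<le> s"
  shows "measure_pmf.prob (bern_vec n p)
      {x. \<exists>j<m. (\<Sum>i<n. A j i * (if x i then 1 else 0)) < b j} \<le> m * exp (- 2 * g\<^sup>2 / s)"
proof -
  have "{x. \<exists>j<m. (\<Sum>i<n. A j i * (if x i then 1 else 0)) < b j} =
      (\<Union>j<m. {x. (\<Sum>i<n. A j i * (if x i then 1 else 0)) < b j})"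
    by auto
  then have "measure_pmf.prob (bern_vec n p)
      {x. \<exists>j<m. (\<Sum>i<n. A j i * (if x i then 1 else 0)) < b j} \<le>
      (\<Sum>j<m. measure_pmf.prob (bern_vec n p) {x. (\<Sum>i<n. A j i * (if x i then 1 else 0)) < b j})"
    by (simp add: measure_pmf.finite_measure_subadditive_finite)
  also have "\<dots> \<le> (\<Sum>j<m. exp (- 2 * g\<^sup>2 / s))"
    using p g s by (intro sum_mono bern_vec_weighted_sum_lower_tail) auto
  finally show ?thesis
    by simp
qed

lemma gamma_le_row_slack:
  assumes "j < m"
  shows "gamma m n A b p \<le> (\<Sum>i<n. A j i * p i) - b j"
  unfolding gamma_def using assms by (intro Min_le) auto

lemma row_norm_sq_le_eta_sq:
  assumes "j < m"
  shows "(\<Sum>i<n. (A j i)\<^sup>2) \<le> (eta m n A)\<^sup>2"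
proof -
  have "sqrt (\<Sum>i<n. (A j i)\<^sup>2) \<le> eta m n A"
    unfolding eta_def using assms by (intro Max_ge) auto
  then show ?thesis
    by (metis real_sqrt_le_iff real_sqrt_pow2 sum_nonneg zero_le_power2 power_mono real_sqrt_ge_zero)
qed

lemma measure_Pi_pmf_exists_component:
  assumes "finite I"
  shows "measure_pmf.prob (Pi_pmf I d (\<lambda>_. M)) {X. \<exists>l\<in>I. X l \<in> S} =
    1 - measure_pmf.prob M (- S) ^ card I"
proof -
  have "{X. \<exists>l\<in>I. X l \<in> S} = UNIV - Pi I (\<lambda>_. - S)"
    by (auto simp: Pi_def)
  moreover have "measure_pmf.prob (Pi_pmf I d (\<lambda>_. M)) (Pi I (\<lambda>_. - S)) =
      measure_pmf.prob M (- S) ^ card I"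
    using assms by (simp add: measure_Pi_pmf_Pi)
  ultimately show ?thesis
    using measure_pmf.prob_compl[of "Pi I (\<lambda>_. - S)" "Pi_pmf I d (\<lambda>_. M)"] by simp
qed

lemma bern_vec_some_row_violated_le_gamma_eta:
  fixes m n :: nat and A :: "nat \<Rightarrow> nat \<Rightarrow> real" and b p :: "nat \<Rightarrow> real"
  assumes m: "m \<ge> 1" and p: "\<forall>i<n. 0 \<le> p i \<and> p i \<le> 1"
  shows "measure_pmf.prob (bern_vec n p)
      {x. \<exists>j<m. (\<Sum>i<n. A j i * (if x i then 1 else 0)) < b j}
    \<le> exp (- 2 * pos_part ((pos_part (gamma m n A b p))\<^sup>2 / (eta m n A)\<^sup>2 - ln (real m) / 2))"
    (is "?q \<le> exp (- 2 * pos_part ?x)")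
proof (cases "gamma m n A b p \<le> 0")
  case True
  then have "pos_part ?x = 0"
    using m by (simp add: pos_part_def)
  then show ?thesis
    by simp
next
  case False
  let ?G = "gamma m n A b p" and ?E = "eta m n A"
  have "?q \<le> m * exp (- 2 * ?G\<^sup>2 / ?E\<^sup>2)"
    using p False gamma_le_row_slack row_norm_sq_le_eta_sq
    by (intro bern_vec_some_row_violated_le) auto
  also have "\<dots> = exp (ln m - 2 * ?G\<^sup>2 / ?E\<^sup>2)"
    using m by (simp add: exp_diff exp_minus field_simps)
  also have "\<dots> = exp (- 2 * ?x)"
    using False by (simp add: pos_part_def algebra_simps)
  finally have "?q \<le> exp (- 2 * ?x)" .
  moreover have "?q \<le> 1"
    by simp
  ultimately show ?thesis
    by (simp add: pos_part_def max_def)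
qed

theorem mainTheorem7:
  fixes m n k :: nat and A :: "nat \<Rightarrow> nat \<Rightarrow> real" and b p :: "nat \<Rightarrow> real"
  assumes "m \<ge> 1"
    and "\<forall>i<n. 0 \<le> p i \<and> p i \<le> 1"
  shows "phi m n A b p k \<ge>
    1 - exp (- 2 * real k * pos_part ((pos_part (gamma m n A b p))\<^sup>2 / (eta m n A)\<^sup>2 - ln (real m) / 2))"
proof -
  define c where "c = pos_part ((pos_part (gamma m n A b p))\<^sup>2 / (eta m n A)\<^sup>2 - ln (real m) / 2)"
  define F where "F = {x. \<forall>j<m. (\<Sum>i<n. A j i * (if x i then 1 else 0)) \<ge> b j}"
  define q where "q = measure_pmf.prob (bern_vec n p) (- F)"
  have "- F = {x. \<exists>j<m. (\<Sum>i<n. A j i * (if x i then 1 else 0)) < b j}"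
    unfolding F_def by (auto simp: not_le)
  then have q: "0 \<le> q" "q \<le> exp (- 2 * c)"
    unfolding q_def c_def using bern_vec_some_row_violated_le_gamma_eta[OF assms] by simp_all
  have "phi m n A b p k = measure_pmf.prob (bern_samples k n p) {X. \<exists>l\<in>{..<k}. X l \<in> F}"
    unfolding phi_def F_def by (intro arg_cong[where f = "measure_pmf.prob _"]) auto
  also have "\<dots> = 1 - q ^ k"
    unfolding bern_samples_def q_def by (simp add: measure_Pi_pmf_exists_component)
  finally have "phi m n A b p k = 1 - q ^ k" .
  moreover have "q ^ k \<le> exp (- 2 * c) ^ k"
    using q by (intro power_mono)
  moreover have "exp (- 2 * c) ^ k = exp (- 2 * real k * c)"
    by (simp flip: exp_of_nat_mult add: algebra_simps)
  ultimately show ?thesis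
    unfolding c_def by simp
qed

end
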